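(* Let $n\ge2$, $1\le k\le n-1$, $\alpha_1,\alpha_2\in\mathbb{R}$ with $\alpha_1+\alpha_2>k-n$, $1\le p<\frac{\alpha_1+\alpha_2+n-1}{k-1}$ (read as $+\infty$ if $k=1$), $1\le r<\infty$, and $\beta_1,\beta_2\in\mathbb{R}$ with $$\frac{\beta_2+k-1}{r}-\frac{\alpha_2-1}{p}\le\frac{\alpha_1+n}{p}-\frac{\beta_1+n-k}{r}=k.$$ If $R_k$ is bounded from $L^p_{\alpha_1,\alpha_2}(\mathbb{H}^n)$ to $L^r_{\beta_1,\beta_2}(\Xi_k(\mathbb{H}^n))$, then $r\ge p$.
   Context: $\mathbb{H}^n$ real hyperbolic space of curvature $-1$ (Poincaré ball model), origin $0$, distance $d$, volume $dx$. $\Xi_k(\mathbb{H}^n)$: $k$-dimensional totally geodesic submanifolds, $d(0,\xi)=\inf_{x\in\xi}d(0,x)$, with isometry-invariant measure $d\xi$ such that for $\varphi(\xi)=\tilde\varphi(d(0,\xi))$, $\int\varphi\,d\xi=c_{n,k}\int_0^\infty\tilde\varphi(h)\cosh^kh\sinh^{n-k-1}h\,dh$. $R_kf(\xi)=\int_\xi f\,d_\xi x$. $\|f\|^p_{L^p_{\alpha_1,\alpha_2}(\mathbb{H}^n)}=\int|f|^p\sinh^{\alpha_1}d(0,x)\cosh^{\alpha_2}d(0,x)dx$; $\|\varphi\|^r_{L^r_{\beta_1,\beta_2}(\Xi_k)}=\int|\varphi(\xi)|^r\sinh^{\beta_1}d(0,\xi)\cosh^{\beta_2}d(0,\xi)d\xi$.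 *)

theory Defs
  imports "HOL-Analysis.Analysis"
begin

text \<open>Points of H^n are the x :: real^'n with norm x < 1, n = CARD('n).\<close>

definition hball :: "(real^'n) set" where
  "hball = {x. norm x < 1}"

definition hdist :: "real^'n \<Rightarrow> real^'n \<Rightarrow> real" where
  "hdist x y = arcosh (1 + 2 * (norm (x - y))\<^sup>2 / ((1 - (norm x)\<^sup>2) * (1 - (norm y)\<^sup>2)))"

text \<open>Riemannian volume density w.r.t. Lebesgue measure.\<close>
definition hvol_density :: "real^'n \<Rightarrow> real" where
  "hvol_density x = (2 / (1 - (norm x)\<^sup>2)) ^ CARD('n)"

text \<open>p-th power of the weighted norm in L^p_{a1,a2}(H^n) (nonnegative extended real).\<close>
definition Lp_weighted_pow :: "real \<Rightarrow> real \<Rightarrow> real \<Rightarrow> (real^'n \<Rightarrow> real) \<Rightarrow> ennreal" where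
  "Lp_weighted_pow p a1 a2 f =
     (\<integral>\<^sup>+ x. indicator hball x * ennreal (\<bar>f x\<bar> powr p
         * sinh (hdist 0 x) powr a1 * cosh (hdist 0 x) powr a2 * hvol_density x) \<partial>lborel)"

definition epow :: "ennreal \<Rightarrow> real \<Rightarrow> ennreal" where
  "epow x a = (if x = \<infinity> then \<infinity> else ennreal (enn2real x powr a))"

text \<open>A k-dimensional totally geodesic submanifold xi is described by parameters
  (h, g0, G) :: real \<times> (real^'n) \<times> (real^'n^'k):
  h = d(0,xi) > 0, u = g0/|g0| is the direction from 0 to the foot point of xi,
  and the rows w_i = G$i - (G$i . u) u (projections onto u-perp) span the
  k-dimensional subspace of directions of xi at its foot point.  In the hyperboloid
  model, xi = H \<inter> span{(sinh h u, cosh h), (w_i, 0)}.\<close>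

definition xi_dir :: "real^'n \<Rightarrow> real^'n" where
  "xi_dir g0 = g0 /\<^sub>R norm g0"

definition xi_frame :: "real^'n \<Rightarrow> real^'n^'k \<Rightarrow> 'k \<Rightarrow> real^'n" where
  "xi_frame g0 G i = G $ i - (G $ i \<bullet> xi_dir g0) *\<^sub>R xi_dir g0"

definition xi_lin :: "real^'n \<Rightarrow> real^'n^'k \<Rightarrow> real^'k \<Rightarrow> real^'n" where
  "xi_lin g0 G z = (\<Sum>i\<in>UNIV. z $ i *\<^sub>R xi_frame g0 G i)"

text \<open>Parametrisation of xi by z :: real^'k: hyperboloid point
  (L z + T sinh h u, T cosh h), T = sqrt(1 + |L z|^2), mapped to the Poincare ball.\<close>
definition xi_point :: "real \<Rightarrow> real^'n \<Rightarrow> real^'n^'k \<Rightarrow> real^'k \<Rightarrow> real^'n" where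
  "xi_point h g0 G z =
     (let T = sqrt (1 + (norm (xi_lin g0 G z))\<^sup>2)
      in (xi_lin g0 G z + (T * sinh h) *\<^sub>R xi_dir g0) /\<^sub>R (1 + T * cosh h))"

definition xi_gram :: "real^'n \<Rightarrow> real^'n^'k \<Rightarrow> real^'k^'k" where
  "xi_gram g0 G = (\<chi> i j. xi_frame g0 G i \<bullet> xi_frame g0 G j)"

text \<open>Totally geodesic Radon transform (for nonnegative f):
  R_k f(xi) = integral over xi of f w.r.t. the induced hyperbolic k-volume,
  which in the parameter z has density sqrt(det Gram) / sqrt(1 + |L z|^2).\<close>
definition Radon_k :: "(real^'n \<Rightarrow> real) \<Rightarrow> real \<Rightarrow> real^'n \<Rightarrow> real^'n^'k \<Rightarrow> ennreal" where
  "Radon_k f h g0 G =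
     (\<integral>\<^sup>+ (z::real^'k). ennreal (f (xi_point h g0 G z) * sqrt (det (xi_gram g0 G))
          / sqrt (1 + (norm (xi_lin g0 G z))\<^sup>2)) \<partial>lborel)"

text \<open>Isometry-invariant measure d xi on Xi_k (up to a positive constant factor):
  density c cosh^k h sinh^(n-k-1) h in h, u uniform on the sphere, the direction
  space uniform in the Grassmannian of u-perp (realised with Gaussian vectors).\<close>
definition Xi_density :: "'k itself \<Rightarrow> real \<times> (real^'n) \<times> (real^'n^'k) \<Rightarrow> real" where
  "Xi_density _ = (\<lambda>(h, g0, G). (if h > 0 then 1 else 0)
      * cosh h ^ CARD('k) * sinh h ^ (CARD('n) - CARD('k) - 1)
      * exp (- (norm g0)\<^sup>2 / 2) * exp (- (norm G)\<^sup>2 / 2))"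

text \<open>r-th power of the weighted norm in L^r_{b1,b2}(Xi_k(H^n)) of a nonnegative
  function phi on Xi_k, given in the parameters (h, g0, G) (d(0,xi) = h).\<close>
definition Xi_weighted_pow ::
  "real \<Rightarrow> real \<Rightarrow> real \<Rightarrow> (real \<Rightarrow> real^'n \<Rightarrow> real^'n^'k \<Rightarrow> ennreal) \<Rightarrow> ennreal" where
  "Xi_weighted_pow r b1 b2 phi =
     (\<integral>\<^sup>+ (\<xi> :: real \<times> (real^'n) \<times> (real^'n^'k)).
        (case \<xi> of (h, g0, G) \<Rightarrow>
          epow (phi h g0 G) r * ennreal (sinh h powr b1 * cosh h powr b2
             * Xi_density TYPE('k) (h, g0, G))) \<partial>lborel)"

text \<open>Boundedness of R_k : L^p_{a1,a2}(H^n) \<rightarrow> L^r_{b1,b2}(Xi_k(H^n)).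
  Since |R_k f| \<le> R_k |f|, it suffices (and is equivalent) to require the
  estimate for nonnegative measurable f.\<close>
definition Radon_bounded ::
  "'k::finite itself \<Rightarrow> 'n::finite itself \<Rightarrow> real \<Rightarrow> real \<Rightarrow> real \<Rightarrow> real \<Rightarrow> real \<Rightarrow> real \<Rightarrow> bool" where
  "Radon_bounded _ _ p a1 a2 r b1 b2 \<longleftrightarrow>
     (\<exists>C>0. \<forall>f :: real^'n \<Rightarrow> real. f \<in> borel_measurable borel \<longrightarrow> (\<forall>x. f x \<ge> 0) \<longrightarrow>
        epow (Xi_weighted_pow r b1 b2 (\<lambda>h g0 (G :: real^'n^'k). Radon_k f h g0 G)) (1 / r)
          \<le> ennreal C * epow (Lp_weighted_pow p a1 a2 f) (1 / p))"

end

theory Submission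
  imports Defs
begin

text \<open>
  Suppose r < p. Put s = (a1 + n)/p, lambda_j = 5^-j/8, let A_j be the Euclidean annulus
  lambda_j <= |x| <= 4 lambda_j of the ball and test the estimate on
  f_N = sum_{j<N} lambda_j^-s 1_{A_j}. Near the origin sinh d(0,x) is comparable to |x| and
  the other weights are bounded above and below, so by the choice of s every annulus
  contributes a bounded amount to ||f_N||_p^p, which is therefore O(N). A submanifold at
  distance h in [4 lambda_j, 5 lambda_j] from the origin whose direction data lie in a fixed
  box of nondegenerate frames meets A_j in a piece of k-volume comparable to lambda_j^k, so
  R_k f_N >~ lambda_j^(k-s) there. The scaling relation (a1 + n)/p - (b1 + n - k)/r = k
  makes each such shell of submanifolds contribute a fixed positive amount to
  ||R_k f_N||_r^r, which is therefore >~ N. Boundedness then gives N^(1/r) <~ N^(1/p) for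
  all N, contradicting r < p.
\<close>

lemma powr_le_add_powr_bounds:
  fixes u v w a :: real
  assumes "0 < u" "u \<le> v" "v \<le> w"
  shows "v powr a \<le> u powr a + w powr a"
proof (cases "a \<ge> 0")
  case True
  then have "v powr a \<le> w powr a" using assms by (intro powr_mono2) auto
  then show ?thesis using powr_ge_zero[of u a] by linarith
next
  case False
  then have "v powr a \<le> u powr a" using assms by (intro powr_mono2') auto
  then show ?thesis using powr_ge_zero[of w a] by linarith
qed

lemma min_powr_le_powr_between:
  fixes u v w a :: real
  assumes "0 < u" "u \<le> v" "v \<le> w"
  shows "min (u powr a) (w powr a) \<le> v powr a"
proof (cases "a \<ge> 0")
  case True
  then have "u powr a \<le> v powr a" using assms by (intro powr_mono2) auto
  then show ?thesis by simp
next
  case False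
  then have "w powr a \<le> v powr a" using assms by (intro powr_mono2') auto
  then show ?thesis by simp
qed

lemma exp_minus_le_quadratic:
  fixes h :: real
  assumes "0 \<le> h"
  shows "exp (-h) \<le> 1 - h + h\<^sup>2/2"
proof -
  have "1 \<le> 1 + h^4/4" by simp
  also have "\<dots> = (1 - h + h\<^sup>2/2) * (1 + h + h\<^sup>2/2)"
    by (simp add: algebra_simps power2_eq_square power4_eq_xxxx)
  also have "\<dots> \<le> (1 - h + h\<^sup>2/2) * exp h"
  proof (rule mult_left_mono[OF exp_lower_Taylor_quadratic[OF assms]])
    have "1 - h + h\<^sup>2/2 = (h - 1)\<^sup>2 / 2 + 1/2" by (simp add: power2_eq_square field_simps)
    then show "0 \<le> 1 - h + h\<^sup>2/2" by simp
  qed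
  finally show ?thesis by (simp add: exp_minus field_simps)
qed

lemma sinh_cosh_bounds_small:
  fixes h :: real
  assumes "0 \<le> h" "h \<le> 1"
  shows "h \<le> sinh h" "sinh h \<le> 2*h" "1 + h\<^sup>2/4 \<le> cosh h" "cosh h \<le> 1 + h\<^sup>2" "cosh h \<le> 2"
proof -
  have a: "1 + h + h\<^sup>2/2 \<le> exp h" by (rule exp_lower_Taylor_quadratic) fact
  have b: "exp h \<le> 1 + h + h\<^sup>2" by (rule exp_bound) fact+
  have c: "1 - h \<le> exp (-h)" using exp_ge_add_one_self[of "-h"] by simp
  have d: "exp (-h) \<le> 1 - h + h\<^sup>2/2" by (rule exp_minus_le_quadratic) fact
  have hh: "h\<^sup>2 \<le> h" using assms by (simp add: power2_eq_square mult_left_le)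
  show "h \<le> sinh h" using a d by (simp add: sinh_def)
  show "sinh h \<le> 2*h" using b c hh assms by (simp add: sinh_def)
  show "1 + h\<^sup>2/4 \<le> cosh h" using a c by (simp add: cosh_def)
  have "cosh h = (exp h + exp (-h)) / 2" by (simp add: cosh_def)
  then show "cosh h \<le> 1 + h\<^sup>2" using b d zero_le_power2[of h] by argo
  then show "cosh h \<le> 2" using hh assms by simp
qed

lemma epow_ge:
  assumes "ennreal v \<le> X" "0 \<le> v" "0 \<le> a"
  shows "ennreal (v powr a) \<le> epow X a"
proof (cases "X = \<infinity>")
  case True
  then show ?thesis by (simp add: epow_def)
next
  case False
  have "enn2real (ennreal v) \<le> enn2real X"
    by (rule enn2real_mono) (use assms False in \<open>auto simp: top.not_eq_extremum\<close>)
  then have "v powr a \<le> enn2real X powr a" using assms by (intro powr_mono2) auto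
  then show ?thesis using False by (simp add: epow_def ennreal_leI)
qed

lemma epow_le:
  assumes "X \<le> ennreal v" "0 \<le> v" "0 \<le> a"
  shows "epow X a \<le> ennreal (v powr a)"
proof -
  have X: "X \<noteq> \<infinity>" using assms(1) by (auto simp: top_unique)
  have "enn2real X \<le> v" using enn2real_mono[OF assms(1)] assms(2) by simp
  then have "enn2real X powr a \<le> v powr a" using assms(3) by (intro powr_mono2) auto
  then show ?thesis using X by (simp add: epow_def ennreal_leI)
qed

lemma powr_le_of_epow_le:
  assumes lower: "ennreal u \<le> X" and upper: "Y \<le> ennreal v"
    and XY: "epow X a \<le> ennreal C * epow Y b"
    and "0 \<le> u" "0 \<le> v" "0 \<le> a" "0 \<le> b" "0 \<le> C"
  shows "u powr a \<le> C * v powr b"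
proof -
  have "ennreal (u powr a) \<le> epow X a" using epow_ge[OF lower] assms by simp
  also have "\<dots> \<le> ennreal C * epow Y b" by (rule XY)
  also have "\<dots> \<le> ennreal C * ennreal (v powr b)"
    using epow_le[OF upper] assms by (intro mult_left_mono) auto
  finally show ?thesis using assms by (simp add: ennreal_mult[symmetric] ennreal_le_iff)
qed

lemma le_of_powr_growth_bound:
  fixes r p c K C :: real
  assumes r: "0 < r" and p: "0 < p" and c: "0 < c" and K: "0 < K"
    and growth: "\<And>N::nat. N \<ge> 1 \<Longrightarrow> (real N * c) powr (1/r) \<le> C * (real N * K) powr (1/p)"
  shows "p \<le> r"
proof (rule ccontr)
  assume "\<not> p \<le> r"
  define d where "d = 1/r - 1/p"
  have d: "0 < d" unfolding d_def using r \<open>\<not> p \<le> r\<close> by (simp add: frac_less2)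
  define D where "D = C * K powr (1/p) / c powr (1/r)"
  have bounded: "real N powr d \<le> D" if "N \<ge> 1" for N :: nat
  proof -
    have N: "0 < real N" using that by simp
    have "real N powr (1/r) * c powr (1/r) \<le> C * (real N powr (1/p) * K powr (1/p))"
      using growth[OF that] N c K by (simp add: powr_mult)
    then have "real N powr (1/r) \<le> real N powr (1/p) * D"
      using c by (simp add: D_def field_simps)
    then show ?thesis using N by (simp add: d_def powr_diff divide_le_eq mult.commute)
  qed
  define x where "x = (\<bar>D\<bar> + 1) powr (1/d)"
  define N where "N = nat \<lceil>x\<rceil> + 1"
  have "\<bar>D\<bar> + 1 = x powr d" using d by (simp add: x_def powr_powr)
  also have "\<dots> \<le> real N powr d"
    using d by (intro powr_mono2) (auto simp: x_def N_def intro: order_trans[OF le_of_int_ceiling])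
  also have "\<dots> \<le> D" by (rule bounded) (simp add: N_def)
  finally show False by linarith
qed

lemma norm_xi_dir: "g0 \<noteq> 0 \<Longrightarrow> norm (xi_dir g0) = 1"
  by (simp add: xi_dir_def)

lemma inner_xi_dir_self: "g0 \<noteq> 0 \<Longrightarrow> xi_dir g0 \<bullet> xi_dir g0 = 1"
  using norm_xi_dir[of g0] by (simp add: power2_norm_eq_inner[symmetric])

lemma xi_frame_orthogonal: "g0 \<noteq> 0 \<Longrightarrow> xi_frame g0 G i \<bullet> xi_dir g0 = 0"
  by (simp add: xi_frame_def inner_diff_left inner_xi_dir_self)

lemma xi_lin_orthogonal: "g0 \<noteq> 0 \<Longrightarrow> xi_lin g0 G z \<bullet> xi_dir g0 = 0"
  unfolding xi_lin_def inner_sum_left by (simp add: xi_frame_orthogonal)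

lemma norm_xi_frame_le: "norm (xi_frame g0 G i) \<le> norm (G $ i)"
proof (cases "g0 = 0")
  case True
  then show ?thesis by (simp add: xi_frame_def xi_dir_def)
next
  case False
  let ?u = "xi_dir g0"
  have "orthogonal (xi_frame g0 G i) ((G $ i \<bullet> ?u) *\<^sub>R ?u)"
    unfolding orthogonal_def inner_scaleR_right xi_frame_orthogonal[OF False] by simp
  then have "(norm (xi_frame g0 G i + (G $ i \<bullet> ?u) *\<^sub>R ?u))\<^sup>2
      = (norm (xi_frame g0 G i))\<^sup>2 + (norm ((G $ i \<bullet> ?u) *\<^sub>R ?u))\<^sup>2"
    by (rule norm_add_Pythagorean)
  then have "(norm (xi_frame g0 G i))\<^sup>2 \<le> (norm (G $ i))\<^sup>2" by (simp add: xi_frame_def)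
  then show ?thesis by (rule power2_le_imp_le) simp
qed

lemma norm_xi_lin_le:
  fixes G :: "real^'n^'k"
  assumes "\<And>i. \<bar>z $ i\<bar> \<le> d"
  shows "norm (xi_lin g0 G z) \<le> real CARD('k) * d * norm G"
proof -
  have "norm (xi_lin g0 G z) \<le> (\<Sum>i\<in>UNIV. norm (z $ i *\<^sub>R xi_frame g0 G i))"
    unfolding xi_lin_def by (rule norm_sum)
  also have "\<dots> \<le> (\<Sum>i\<in>(UNIV::'k set). d * norm G)"
  proof (rule sum_mono)
    fix i
    have "norm (xi_frame g0 G i) \<le> norm G"
      using norm_xi_frame_le[of g0 G i] Finite_Cartesian_Product.norm_nth_le[of G i] by linarith
    then show "norm (z $ i *\<^sub>R xi_frame g0 G i) \<le> d * norm G"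
      using assms[of i] by (simp add: mult_mono)
  qed
  finally show ?thesis by simp
qed

text \<open>xi_point h g0 G z is the image in the ball of a hyperboloid point with last
  coordinate X = sqrt (1 + |L z|^2) cosh h, so its Euclidean norm is tanh (arcosh X / 2).\<close>

lemma norm_xi_point_sq:
  fixes G :: "real^'n^'k" and z :: "real^'k" and h :: real
  assumes "g0 \<noteq> 0"
  defines "X \<equiv> sqrt (1 + (norm (xi_lin g0 G z))\<^sup>2) * cosh h"
  shows "(norm (xi_point h g0 G z))\<^sup>2 = (X - 1) / (X + 1)"
proof -
  define w where "w = xi_lin g0 G z"
  define u where "u = xi_dir g0"
  define T where "T = sqrt (1 + (norm w)\<^sup>2)"
  have wu: "w \<bullet> u = 0" "u \<bullet> w = 0"
    using xi_lin_orthogonal[OF assms(1)] by (simp_all add: w_def u_def inner_commute)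
  have uu: "u \<bullet> u = 1" using inner_xi_dir_self[OF assms(1)] by (simp add: u_def)
  have T1: "T \<ge> 1" by (simp add: T_def)
  have X1: "X \<ge> 1"
    using T1 cosh_real_ge_1[of h] mult_mono[of 1 T 1 "cosh h"] by (simp add: X_def T_def w_def)
  have "(norm (w + (T * sinh h) *\<^sub>R u))\<^sup>2 = (norm w)\<^sup>2 + (T * sinh h)\<^sup>2"
    unfolding power2_norm_eq_inner
    by (simp add: inner_add_left inner_add_right wu uu power2_eq_square)
  also have "\<dots> = X\<^sup>2 - 1"
    using cosh_square_eq[of h] by (simp add: X_def T_def w_def power_mult_distrib algebra_simps)
  finally have v: "(norm (w + (T * sinh h) *\<^sub>R u))\<^sup>2 = X\<^sup>2 - 1" .
  have "xi_point h g0 G z = (w + (T * sinh h) *\<^sub>R u) /\<^sub>R (1 + X)"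
    by (simp add: xi_point_def Let_def w_def u_def T_def X_def)
  then have "norm (xi_point h g0 G z) = norm (w + (T * sinh h) *\<^sub>R u) / (1 + X)"
    using X1 by (simp add: divide_inverse_commute)
  then have "(norm (xi_point h g0 G z))\<^sup>2 = (X\<^sup>2 - 1) / (1 + X)\<^sup>2"
    using v by (simp add: power_divide)
  also have "\<dots> = ((X - 1) * (X + 1)) / ((X + 1) * (X + 1))"
    by (simp add: power2_eq_square algebra_simps)
  also have "\<dots> = (X - 1) / (X + 1)" using X1 by simp
  finally show ?thesis .
qed

lemma cosh_ratio_bounds:
  fixes l X :: real
  assumes l: "0 < l" "l \<le> 1/8" and X: "1 + 4 * l\<^sup>2 \<le> X" "X \<le> 1 + 26 * l\<^sup>2"
  shows "l\<^sup>2 \<le> (X - 1) / (X + 1)" "(X - 1) / (X + 1) \<le> (4 * l)\<^sup>2"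
proof -
  have "l\<^sup>2 \<le> (1/8)\<^sup>2" using l by (intro power_mono) auto
  then have ll: "l\<^sup>2 \<le> 1/64" by (simp add: power2_eq_square)
  have Xp: "X + 1 > 0" using X zero_le_power2[of l] by argo
  have "l\<^sup>2 * (X + 1) \<le> l\<^sup>2 * (2 + 26 * (1/64))"
    using X ll by (intro mult_left_mono) auto
  also have "\<dots> \<le> X - 1" using X by simp
  finally show "l\<^sup>2 \<le> (X - 1) / (X + 1)" using Xp by (simp add: le_divide_eq)
  have "X - 1 \<le> 16 * l\<^sup>2 * 2" using X zero_le_power2[of l] by argo
  also have "\<dots> \<le> 16 * l\<^sup>2 * (X + 1)"
    using X zero_le_power2[of l] by (intro mult_left_mono) auto
  finally show "(X - 1) / (X + 1) \<le> (4 * l)\<^sup>2"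
    using Xp by (simp add: divide_le_eq power_mult_distrib)
qed

lemma norm_xi_point_between:
  assumes g0: "g0 \<noteq> 0" and l: "0 < l" "l \<le> 1/8" and h: "4*l \<le> h" "h \<le> 5*l"
    and w: "norm (xi_lin g0 G z) \<le> l"
  shows "l \<le> norm (xi_point h g0 G z)" "norm (xi_point h g0 G z) \<le> 4*l"
proof -
  define T where "T = sqrt (1 + (norm (xi_lin g0 G z))\<^sup>2)"
  define X where "X = T * cosh h"
  have "0 \<le> h" "h \<le> 1" using h l by auto
  note sc = sinh_cosh_bounds_small[OF this]
  have T1: "1 \<le> T" by (simp add: T_def)
  have "1 + (norm (xi_lin g0 G z))\<^sup>2 \<le> (1 + l\<^sup>2/2)\<^sup>2"
    using power_mono[OF w norm_ge_zero, of 2] zero_le_power2[of "l\<^sup>2"]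
    by (simp add: power2_eq_square algebra_simps)
  then have T2: "T \<le> 1 + l\<^sup>2/2"
    unfolding T_def using real_sqrt_le_mono by fastforce
  have "(4*l)\<^sup>2 \<le> h\<^sup>2" "h\<^sup>2 \<le> (5*l)\<^sup>2" using h l by (intro power_mono; simp)+
  then have c: "1 + 4 * l\<^sup>2 \<le> cosh h" "cosh h \<le> 1 + 25 * l\<^sup>2"
    using sc(3,4) by (simp_all add: power_mult_distrib)
  have X1: "1 + 4 * l\<^sup>2 \<le> X" using mult_mono[OF T1 c(1)] T1 by (simp add: X_def)
  have X2: "X \<le> 1 + 26 * l\<^sup>2"
  proof -
    have "l\<^sup>2 \<le> (1/8)\<^sup>2" using l by (intro power_mono) auto
    then have ll: "l\<^sup>2 \<le> 1/64" by (simp add: power2_eq_square)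
    have "X \<le> (1 + l\<^sup>2/2) * (1 + 25 * l\<^sup>2)" unfolding X_def using T1 T2 c by (intro mult_mono) auto
    also have "\<dots> = 1 + 51/2 * l\<^sup>2 + 25/2 * (l\<^sup>2 * l\<^sup>2)" by (simp add: algebra_simps)
    also have "\<dots> \<le> 1 + 51/2 * l\<^sup>2 + 25/2 * (l\<^sup>2 * (1/64))"
      using mult_left_mono[OF ll zero_le_power2[of l]] by simp
    finally show ?thesis using zero_le_power2[of l] by linarith
  qed
  note ratio = cosh_ratio_bounds[OF l X1 X2]
  have "(norm (xi_point h g0 G z))\<^sup>2 = (X - 1) / (X + 1)"
    using norm_xi_point_sq[OF g0] by (simp add: X_def T_def)
  with ratio have "l\<^sup>2 \<le> (norm (xi_point h g0 G z))\<^sup>2" "(norm (xi_point h g0 G z))\<^sup>2 \<le> (4*l)\<^sup>2"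
    by simp_all
  then show "l \<le> norm (xi_point h g0 G z)" "norm (xi_point h g0 G z) \<le> 4*l"
    using l by (auto intro: power2_le_imp_le)
qed

lemma cosh_sinh_hdist_0:
  fixes x :: "real^'n"
  assumes "norm x < 1"
  shows "cosh (hdist 0 x) = (1 + (norm x)\<^sup>2) / (1 - (norm x)\<^sup>2)"
    and "sinh (hdist 0 x) = 2 * norm x / (1 - (norm x)\<^sup>2)"
proof -
  define t where "t = norm x"
  have t: "0 \<le> t" "t\<^sup>2 < 1" using assms by (simp_all add: t_def abs_square_less_1)
  define y where "y = (1 + t\<^sup>2) / (1 - t\<^sup>2)"
  have t1: "0 < 1 - t\<^sup>2" using t by simp
  then have "1 + 2 * t\<^sup>2 / (1 - t\<^sup>2) = y" by (simp add: y_def add_divide_eq_iff)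
  then have hd: "hdist 0 x = arcosh y" by (simp add: hdist_def t_def)
  have y1: "1 \<le> y" using t by (simp add: y_def)
  have "y\<^sup>2 - 1 = (2 * t / (1 - t\<^sup>2))\<^sup>2"
    using t1 unfolding y_def by (simp add: field_simps) (simp add: algebra_simps power2_eq_square)
  then have "sqrt (y\<^sup>2 - 1) = 2 * t / (1 - t\<^sup>2)" using t by simp
  then show "cosh (hdist 0 x) = (1 + (norm x)\<^sup>2) / (1 - (norm x)\<^sup>2)"
    and "sinh (hdist 0 x) = 2 * norm x / (1 - (norm x)\<^sup>2)"
    using y1 by (simp_all add: hd sinh_arcosh_real y_def t_def)
qed

lemma hyperbolic_weight_le_near_0:
  fixes x :: "real^'n"
  assumes l: "0 < l" "l \<le> 1/8" and x: "l \<le> norm x" "norm x \<le> 4*l"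
  shows "sinh (hdist 0 x) powr a1 * cosh (hdist 0 x) powr a2 * hvol_density x
     \<le> (2 powr a1 + 12 powr a1) * (1 + 2 powr a2) * 3^CARD('n) * l powr a1"
proof -
  define t where "t = norm x"
  have t: "0 \<le> t" "t \<le> 1/2" using x l by (auto simp: t_def)
  have tt: "t\<^sup>2 \<le> 1/4" using power_mono[OF t(2) t(1), of 2] by (simp add: power2_eq_square)
  have d: "3/4 \<le> 1 - t\<^sup>2" using tt by simp
  have ch: "cosh (hdist 0 x) = (1 + t\<^sup>2) / (1 - t\<^sup>2)" and sh: "sinh (hdist 0 x) = 2 * t / (1 - t\<^sup>2)"
    using cosh_sinh_hdist_0[of x] t by (simp_all add: t_def)
  have "2 * t \<le> sinh (hdist 0 x)" unfolding sh using d t by (simp add: le_divide_eq mult_left_le)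
  moreover have "sinh (hdist 0 x) \<le> 3 * t"
    using mult_left_mono[OF d, of "3*t"] d t by (simp add: sh divide_le_eq)
  ultimately have "sinh (hdist 0 x) powr a1 \<le> (2*l) powr a1 + (12*l) powr a1"
    using x l by (intro powr_le_add_powr_bounds) (auto simp: t_def)
  also have "\<dots> = (2 powr a1 + 12 powr a1) * l powr a1" using l by (simp add: powr_mult algebra_simps)
  finally have A: "sinh (hdist 0 x) powr a1 \<le> (2 powr a1 + 12 powr a1) * l powr a1" .
  have "1 \<le> cosh (hdist 0 x)" "cosh (hdist 0 x) \<le> 2" unfolding ch using d tt by (simp_all add: field_simps)
  then have "cosh (hdist 0 x) powr a2 \<le> 1 powr a2 + 2 powr a2" by (intro powr_le_add_powr_bounds) auto
  then have B: "cosh (hdist 0 x) powr a2 \<le> 1 + 2 powr a2" by simp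
  have "2 / (1 - t\<^sup>2) \<le> 3" using d by (simp add: divide_le_eq)
  then have C: "hvol_density x \<le> 3^CARD('n)"
    unfolding hvol_density_def using d by (intro power_mono) (auto simp: t_def)
  have "sinh (hdist 0 x) powr a1 * cosh (hdist 0 x) powr a2 * hvol_density x
     \<le> ((2 powr a1 + 12 powr a1) * l powr a1) * (1 + 2 powr a2) * 3^CARD('n)"
    using A B C d by (intro mult_mono) (auto simp: hvol_density_def t_def)
  then show ?thesis by (simp add: algebra_simps)
qed

lemma emeasure_lborel_cube_cart:
  fixes a :: real
  assumes "0 \<le> a"
  shows "emeasure lborel (cbox (\<chi> i::'n::finite. -a) (\<chi> i. a)) = ennreal ((2*a)^CARD('n))"
proof -
  have "cbox (\<chi> i::'n. -a) (\<chi> i. a) \<noteq> {}"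
    using assms by (simp add: interval_cbox_cart[symmetric] less_eq_vec_def)
  then have "measure lborel (cbox (\<chi> i::'n. -a) (\<chi> i. a)) = (2*a)^CARD('n)"
    by (simp add: content_cbox_cart)
  moreover have "emeasure lborel (cbox (\<chi> i::'n. -a) (\<chi> i. a))
      = ennreal (measure lborel (cbox (\<chi> i::'n. -a) (\<chi> i. a)))"
    by (simp add: emeasure_eq_measure2)
  ultimately show ?thesis by simp
qed

text \<open>The scales test_scale j = lambda_j = 5^-j/8 are sparse enough that both the annuli
  [lambda_j, 4 lambda_j] in the ball and the distance shells [4 lambda_j, 5 lambda_j] in Xi_k
  are pairwise disjoint.\<close>

definition test_scale :: "nat \<Rightarrow> real" where
  "test_scale j = (1/8) * (1/5)^j"

definition test_annulus :: "nat \<Rightarrow> (real^'n) set" where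
  "test_annulus j = {x. test_scale j \<le> norm x \<and> norm x \<le> 4 * test_scale j}"

definition test_fun :: "real \<Rightarrow> nat \<Rightarrow> real^'n \<Rightarrow> real" where
  "test_fun s N x = (\<Sum>j<N. test_scale j powr (-s) * indicator (test_annulus j) x)"

lemma test_scale_pos: "0 < test_scale j"
  by (simp add: test_scale_def)

lemma test_scale_le: "test_scale j \<le> 1/8"
  by (simp add: test_scale_def power_le_one)

lemma test_scale_less: "i < j \<Longrightarrow> test_scale j \<le> test_scale i / 5"
  unfolding test_scale_def
  by (induction j) (auto simp: less_Suc_eq intro: order_trans[of _ "(1/5)^_ / 8"])

lemma test_scale_ranges_disjoint:
  assumes "0 < a" "b < 5 * a"
    and "a * test_scale i \<le> t" "t \<le> b * test_scale i" "a * test_scale j \<le> t" "t \<le> b * test_scale j"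
  shows "i = j"
proof -
  have less: False if "i' < j'" "a * test_scale i' \<le> t" "t \<le> b * test_scale j'" for i' j'
  proof -
    have "0 < t" using that(2) assms(1) test_scale_pos[of i'] by (smt (verit) mult_pos_pos)
    then have "0 < b" using that(3) test_scale_pos[of j'] by (smt (verit) mult_nonpos_nonneg)
    have "b * test_scale j' \<le> b * (test_scale i' / 5)"
      using test_scale_less[OF that(1)] \<open>0 < b\<close> by (intro mult_left_mono) auto
    also have "\<dots> < a * test_scale i'" using assms(2) test_scale_pos[of i'] by simp
    finally show False using that by simp
  qed
  show ?thesis using less[of i j] less[of j i] assms by (cases i j rule: linorder_cases) auto
qed

lemma test_annulus_disjoint: "x \<in> test_annulus i \<Longrightarrow> x \<in> test_annulus j \<Longrightarrow> i = j"
  using test_scale_ranges_disjoint[of 1 4 i "norm x" j] by (simp add: test_annulus_def)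

lemma test_fun_eq:
  assumes "j < N" "x \<in> test_annulus j"
  shows "test_fun s N x = test_scale j powr (-s)"
proof -
  have "test_fun s N x = (\<Sum>i<N. if i = j then test_scale j powr (-s) else 0)"
    unfolding test_fun_def using assms(2) test_annulus_disjoint
    by (intro sum.cong) (auto simp: indicator_def)
  then show ?thesis using assms(1) by simp
qed

lemma test_fun_eq_0: "(\<And>j. j < N \<Longrightarrow> x \<notin> test_annulus j) \<Longrightarrow> test_fun s N x = 0"
  unfolding test_fun_def by (intro sum.neutral) auto

lemma test_fun_nonneg: "0 \<le> test_fun s N x"
  unfolding test_fun_def by (intro sum_nonneg) auto

lemma test_fun_measurable: "test_fun s N \<in> borel_measurable borel"
proof -
  have "closed (test_annulus j :: (real^'n) set)" for j
    unfolding test_annulus_def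
    by (intro closed_Collect_conj closed_Collect_le continuous_intros)
  then show ?thesis
    unfolding test_fun_def
    by (intro borel_measurable_sum borel_measurable_times borel_measurable_const
        borel_measurable_indicator borel_closed)
qed

lemma test_annulus_subset_cube:
  "test_annulus j \<subseteq> cbox (\<chi> i::'n::finite. -(4 * test_scale j)) (\<chi> i. 4 * test_scale j)"
proof
  fix x :: "real^'n"
  assume "x \<in> test_annulus j"
  then have "\<bar>x $ i\<bar> \<le> 4 * test_scale j" for i
    using component_le_norm_cart[of x i] by (simp add: test_annulus_def)
  then have "-(4 * test_scale j) \<le> x $ i \<and> x $ i \<le> 4 * test_scale j" for i
    by (meson abs_le_D1 abs_le_D2 minus_le_iff)
  then show "x \<in> cbox (\<chi> i::'n. -(4 * test_scale j)) (\<chi> i. 4 * test_scale j)"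
    by (simp add: mem_box_cart)
qed

lemma Lp_integrand_test_fun_le:
  fixes x :: "real^'n" and a1 a2 p s :: real
  assumes "0 < p"
  defines "K \<equiv> (2 powr a1 + 12 powr a1) * (1 + 2 powr a2) * 3^CARD('n)"
  shows "indicator hball x * ennreal (\<bar>test_fun s N x\<bar> powr p
           * sinh (hdist 0 x) powr a1 * cosh (hdist 0 x) powr a2 * hvol_density x)
     \<le> (\<Sum>j<N. ennreal (K * test_scale j powr (a1 - s * p))
           * indicator (cbox (\<chi> i::'n. -(4 * test_scale j)) (\<chi> i. 4 * test_scale j)) x)"
proof (cases "\<exists>j<N. x \<in> test_annulus j")
  case True
  then obtain j where j: "j < N" "x \<in> test_annulus j" by blast
  have "\<bar>test_fun s N x\<bar> powr p * sinh (hdist 0 x) powr a1 * cosh (hdist 0 x) powr a2 * hvol_density x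
      = test_scale j powr (-s * p)
          * (sinh (hdist 0 x) powr a1 * cosh (hdist 0 x) powr a2 * hvol_density x)"
    using test_fun_eq[OF j] test_scale_pos[of j] by (simp add: powr_powr mult.assoc)
  also have "\<dots> \<le> test_scale j powr (-s * p) * (K * test_scale j powr a1)"
    using j(2) unfolding K_def test_annulus_def
    by (intro mult_left_mono hyperbolic_weight_le_near_0 test_scale_pos test_scale_le) auto
  also have "\<dots> = K * test_scale j powr (a1 - s * p)"
    by (simp add: powr_add[symmetric] mult_ac)
  finally have "indicator hball x * ennreal (\<bar>test_fun s N x\<bar> powr p
           * sinh (hdist 0 x) powr a1 * cosh (hdist 0 x) powr a2 * hvol_density x)
      \<le> ennreal (K * test_scale j powr (a1 - s * p))
           * indicator (cbox (\<chi> i::'n. -(4 * test_scale j)) (\<chi> i. 4 * test_scale j)) x"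
    using test_annulus_subset_cube j(2) by (auto simp: indicator_def intro: ennreal_leI)
  also have "\<dots> \<le> (\<Sum>j<N. ennreal (K * test_scale j powr (a1 - s * p))
           * indicator (cbox (\<chi> i::'n. -(4 * test_scale j)) (\<chi> i. 4 * test_scale j)) x)"
    by (rule member_le_sum) (use j in auto)
  finally show ?thesis .
next
  case False
  then show ?thesis using test_fun_eq_0[of N x s] assms(1) by auto
qed

lemma Lp_weighted_pow_test_fun_le:
  assumes p: "0 < p" and s: "s * p = a1 + real CARD('n)"
  obtains K where "0 < K"
    "\<And>N. Lp_weighted_pow p a1 a2 (test_fun s N :: real^'n \<Rightarrow> real) \<le> ennreal (real N * K)"
proof
  define K1 where "K1 = (2 powr a1 + 12 powr a1) * (1 + 2 powr a2) * 3^CARD('n)"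
  define cube :: "nat \<Rightarrow> (real^'n) set"
    where "cube j = cbox (\<chi> i. -(4 * test_scale j)) (\<chi> i. 4 * test_scale j)" for j
  show K: "0 < K1 * 8^CARD('n)" unfolding K1_def by (intro mult_pos_pos add_pos_pos) auto
  fix N
  have "Lp_weighted_pow p a1 a2 (test_fun s N :: real^'n \<Rightarrow> real)
      \<le> (\<integral>\<^sup>+ x. (\<Sum>j<N. ennreal (K1 * test_scale j powr (a1 - s * p)) * indicator (cube j) x) \<partial>lborel)"
    unfolding Lp_weighted_pow_def K1_def cube_def
    by (intro nn_integral_mono Lp_integrand_test_fun_le p)
  also have "\<dots> = (\<Sum>j<N. \<integral>\<^sup>+ x. ennreal (K1 * test_scale j powr (a1 - s * p)) * indicator (cube j) x \<partial>lborel)"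
    by (rule nn_integral_sum) (simp add: cube_def)
  also have "\<dots> = (\<Sum>j<N. ennreal (K1 * test_scale j powr (a1 - s * p)) * emeasure lborel (cube j))"
    by (intro sum.cong refl nn_integral_cmult_indicator) (simp add: cube_def)
  also have "\<dots> = (\<Sum>j<N. ennreal (K1 * 8^CARD('n)))"
  proof (rule sum.cong[OF refl])
    fix j
    have l: "0 < test_scale j" by (rule test_scale_pos)
    have "K1 * test_scale j powr (a1 - s * p) * (8 * test_scale j)^CARD('n)
        = K1 * 8^CARD('n) * (test_scale j powr (- real CARD('n)) * test_scale j powr real CARD('n))"
      using l s by (simp add: power_mult_distrib powr_realpow)
    also have "\<dots> = K1 * 8^CARD('n)" using l by (simp add: powr_add[symmetric])
    finally show "ennreal (K1 * test_scale j powr (a1 - s * p)) * emeasure lborel (cube j)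
        = ennreal (K1 * 8^CARD('n))"
      using l unfolding cube_def
      by (simp add: emeasure_lborel_cube_cart K1_def ennreal_mult[symmetric])
  qed
  also have "\<dots> = ennreal (real N * (K1 * 8^CARD('n)))"
    using K by (simp add: ennreal_mult ennreal_of_nat_eq_real_of_nat)
  finally show "Lp_weighted_pow p a1 a2 (test_fun s N :: real^'n \<Rightarrow> real)
      \<le> ennreal (real N * (K1 * 8^CARD('n)))" .
qed

lemma continuous_on_det_xi_gram:
  "continuous_on {(g0, G :: real^'n^'k). g0 \<noteq> 0} (\<lambda>(g0, G). det (xi_gram g0 G))"
  unfolding det_def xi_gram_def xi_frame_def xi_dir_def case_prod_unfold
  by (intro continuous_intros) auto

lemma exists_xi_gram_det_1:
  assumes "CARD('k) < CARD('n)"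
  obtains g0 :: "real^'n" and G :: "real^'n^'k" where "g0 \<noteq> 0" "det (xi_gram g0 G) = 1"
proof -
  obtain a :: 'n where True by blast
  have "card (UNIV :: 'k set) \<le> card (UNIV - {a})" using assms by simp
  then obtain e :: "'k \<Rightarrow> 'n" where e: "e ` UNIV \<subseteq> UNIV - {a}" "inj e"
    using card_le_inj[of "UNIV :: 'k set" "UNIV - {a}"] by auto
  define g0 :: "real^'n" where "g0 = axis a 1"
  define G :: "real^'n^'k" where "G = (\<chi> i. axis (e i) 1)"
  have frame: "xi_frame g0 G i = axis (e i) 1" for i
    using e(1) by (auto simp: xi_frame_def xi_dir_def g0_def G_def inner_axis_axis)
  have "xi_gram g0 G = mat 1"
    using e(2) by (auto simp: xi_gram_def frame inner_axis_axis mat_def vec_eq_iff inj_def)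
  then show ?thesis using that[of g0 G] by (simp add: g0_def axis_eq_0_iff)
qed

lemma good_xi_param_box:
  assumes "CARD('k) < CARD('n)"
  obtains a b :: "(real^'n) \<times> (real^'n^'k)" and B :: real
  where "box a b \<noteq> {}" "1 \<le> B"
    "\<And>g0 G. (g0, G) \<in> box a b \<Longrightarrow>
       g0 \<noteq> 0 \<and> 1/2 \<le> det (xi_gram g0 G) \<and> norm g0 \<le> B \<and> norm G \<le> B"
proof -
  obtain g0 :: "real^'n" and G :: "real^'n^'k" where q0: "g0 \<noteq> 0" "det (xi_gram g0 G) = 1"
    using exists_xi_gram_det_1[OF assms] .
  define S where "S = {(g0 :: real^'n, G :: real^'n^'k). g0 \<noteq> 0}"
  define U where "U = S \<inter> (\<lambda>(g0, G). det (xi_gram g0 G)) -` {1/2<..}"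
  have "open S" unfolding S_def case_prod_unfold by (intro open_Collect_neq continuous_intros)
  then have "open U"
    using continuous_on_det_xi_gram unfolding U_def S_def
    by (auto intro: continuous_open_preimage)
  moreover have "(g0, G) \<in> U" using q0 by (simp add: U_def S_def)
  ultimately obtain e where e: "e > 0" "ball (g0, G) e \<subseteq> U" using openE by blast
  obtain a b where ab: "(g0, G) \<in> box a b" "box a b \<subseteq> ball (g0, G) (min e 1)"
    using rational_boxes[of "min e 1" "(g0, G)"] e by auto
  show ?thesis
  proof
    show "box a b \<noteq> {}" using ab by auto
    show "1 \<le> norm (g0, G) + 1" by simp
    fix g0' G' assume "(g0', G') \<in> box a b"
    then have q: "(g0', G') \<in> ball (g0, G) (min e 1)" using ab by auto
    then have "(g0', G') \<in> U" using e by auto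
    moreover have "norm (g0', G') \<le> norm (g0, G) + 1"
      using q norm_triangle_sub[of "(g0', G')" "(g0, G)"] norm_minus_commute[of "(g0', G')" "(g0, G)"]
      by (auto simp: dist_norm)
    moreover have "norm g0' \<le> norm (g0', G')" "norm G' \<le> norm (g0', G')"
      using norm_fst_le[of g0' G'] norm_snd_le[of G' g0'] by auto
    ultimately show "g0' \<noteq> 0 \<and> 1/2 \<le> det (xi_gram g0' G') \<and> norm g0' \<le> norm (g0, G) + 1
        \<and> norm G' \<le> norm (g0, G) + 1"
      by (auto simp: U_def S_def)
  qed
qed

lemma Radon_integrand_test_fun_ge:
  fixes G :: "real^'n^'k"
  assumes g0: "g0 \<noteq> 0" and det: "1/2 \<le> det (xi_gram g0 G)" and B: "norm G \<le> B" "1 \<le> B"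
    and j: "j < N" and h: "4 * test_scale j \<le> h" "h \<le> 5 * test_scale j"
    and z: "\<And>i. \<bar>z $ i\<bar> \<le> test_scale j / (real CARD('k) * B)"
  shows "test_scale j powr (-s) / 2 \<le> test_fun s N (xi_point h g0 G z)
    * sqrt (det (xi_gram g0 G)) / sqrt (1 + (norm (xi_lin g0 G z))\<^sup>2)"
proof -
  define l where "l = test_scale j"
  have l: "0 < l" "l \<le> 1/8" using test_scale_pos test_scale_le by (simp_all add: l_def)
  have "norm (xi_lin g0 G z) \<le> real CARD('k) * (l / (real CARD('k) * B)) * norm G"
    using z unfolding l_def by (rule norm_xi_lin_le)
  also have "\<dots> \<le> real CARD('k) * (l / (real CARD('k) * B)) * B"
    using B l by (intro mult_left_mono) auto
  also have "\<dots> = l" using B by simp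
  finally have w: "norm (xi_lin g0 G z) \<le> l" .
  then have "xi_point h g0 G z \<in> test_annulus j"
    using norm_xi_point_between[OF g0 l _ _ w] h by (simp add: test_annulus_def l_def)
  then have f: "test_fun s N (xi_point h g0 G z) = l powr (-s)"
    using test_fun_eq[OF j] by (simp add: l_def)
  have "(norm (xi_lin g0 G z))\<^sup>2 \<le> 1" using w l by (simp add: abs_square_le_1)
  then have "sqrt (1 + (norm (xi_lin g0 G z))\<^sup>2) \<le> sqrt (4 * det (xi_gram g0 G))"
    using det by (intro real_sqrt_le_mono) simp
  then have "l powr (-s) * sqrt (1 + (norm (xi_lin g0 G z))\<^sup>2) \<le> l powr (-s) * (2 * sqrt (det (xi_gram g0 G)))"
    by (intro mult_left_mono) (simp_all add: real_sqrt_mult)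
  moreover have "0 < sqrt (1 + (norm (xi_lin g0 G z))\<^sup>2)" by (simp add: add_pos_nonneg)
  ultimately show ?thesis by (simp add: f field_simps l_def)
qed

lemma Radon_k_test_fun_ge:
  fixes G :: "real^'n^'k"
  assumes g0: "g0 \<noteq> 0" and det: "1/2 \<le> det (xi_gram g0 G)" and B: "norm G \<le> B" "1 \<le> B"
    and j: "j < N" and h: "4 * test_scale j \<le> h" "h \<le> 5 * test_scale j"
  shows "ennreal ((2 / (real CARD('k) * B)) ^ CARD('k) / 2 * test_scale j powr (real CARD('k) - s))
    \<le> Radon_k (test_fun s N) h g0 G"
proof -
  define l where "l = test_scale j"
  define d where "d = l / (real CARD('k) * B)"
  have l: "0 < l" and d: "0 < d" using test_scale_pos B by (simp_all add: l_def d_def)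
  define C where "C = cbox (\<chi> i::'k. -d) (\<chi> i. d)"
  have integrand: "ennreal (l powr (-s) / 2) * indicator C z \<le> ennreal (test_fun s N (xi_point h g0 G z)
      * sqrt (det (xi_gram g0 G)) / sqrt (1 + (norm (xi_lin g0 G z))\<^sup>2))" for z
  proof (cases "z \<in> C")
    case True
    then have "\<bar>z $ i\<bar> \<le> l / (real CARD('k) * B)" for i
      by (simp add: C_def d_def mem_box_cart abs_le_iff minus_le_iff)
    then show ?thesis
      using Radon_integrand_test_fun_ge[OF g0 det B j h] True by (simp add: ennreal_leI l_def)
  qed (simp add: C_def)
  have "ennreal ((2 / (real CARD('k) * B)) ^ CARD('k) / 2 * l powr (real CARD('k) - s))
      = ennreal (l powr (-s) / 2) * emeasure lborel C"
    using l d B unfolding C_def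
    by (simp add: emeasure_lborel_cube_cart ennreal_mult[symmetric] d_def
        powr_diff powr_minus powr_realpow power_divide power_mult_distrib field_simps)
  also have "\<dots> = (\<integral>\<^sup>+ z. ennreal (l powr (-s) / 2) * indicator C z \<partial>lborel)"
    by (simp add: C_def nn_integral_cmult_indicator)
  also have "\<dots> \<le> Radon_k (test_fun s N) h g0 G"
    unfolding Radon_k_def by (intro nn_integral_mono integrand)
  finally show ?thesis by (simp add: l_def)
qed

lemma Xi_weight_ge:
  fixes G :: "real^'n^'k"
  assumes l: "0 < l" "l \<le> 1/8" and h: "4*l \<le> h" "h \<le> 5*l"
    and B: "norm g0 \<le> B" "norm G \<le> B"
  defines "m \<equiv> CARD('n) - CARD('k) - 1"
  shows "min (4 powr b1) (10 powr b1) * min 1 (2 powr b2) * 4^m * exp (- B\<^sup>2) * l powr (b1 + real m)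
    \<le> sinh h powr b1 * cosh h powr b2 * Xi_density TYPE('k) (h, g0, G)"
proof -
  have "0 \<le> h" "h \<le> 1" using l h by auto
  note sc = sinh_cosh_bounds_small[OF this]
  have h0: "0 < h" using l h by simp
  have "min ((4*l) powr b1) ((10*l) powr b1) \<le> sinh h powr b1"
    using l h sc by (intro min_powr_le_powr_between) auto
  then have S: "min (4 powr b1) (10 powr b1) * l powr b1 \<le> sinh h powr b1"
    using l by (simp add: powr_mult min_mult_distrib_right)
  have C: "min 1 (2 powr b2) \<le> cosh h powr b2"
    using min_powr_le_powr_between[of 1 "cosh h" 2 b2] sc(5) cosh_real_ge_1[of h] by simp
  have "4^m * l^m = (4*l)^m" by (simp add: power_mult_distrib)
  also have "\<dots> \<le> sinh h ^ m" using sc(1) h l by (intro power_mono) auto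
  also have "\<dots> \<le> cosh h ^ CARD('k) * sinh h ^ m"
    using sc(1) h0 by (simp add: mult_le_cancel_right1 one_le_power cosh_real_ge_1)
  finally have D: "4^m * l^m \<le> cosh h ^ CARD('k) * sinh h ^ m" .
  have "(norm g0)\<^sup>2 \<le> B\<^sup>2" "(norm G)\<^sup>2 \<le> B\<^sup>2" using B by (auto intro: power_mono)
  then have E: "exp (- B\<^sup>2) \<le> exp (-(norm g0)\<^sup>2/2) * exp (-(norm G)\<^sup>2/2)"
    by (simp add: exp_add[symmetric])
  have "min (4 powr b1) (10 powr b1) * min 1 (2 powr b2) * 4^m * exp (- B\<^sup>2) * l powr (b1 + real m)
      = (min (4 powr b1) (10 powr b1) * l powr b1) * min 1 (2 powr b2) * (4^m * l^m) * exp (- B\<^sup>2)"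
    using l by (simp add: powr_add powr_realpow mult_ac)
  also have "\<dots> \<le> sinh h powr b1 * cosh h powr b2 * (cosh h ^ CARD('k) * sinh h ^ m)
      * (exp (-(norm g0)\<^sup>2/2) * exp (-(norm G)\<^sup>2/2))"
    by (rule mult_mono[OF mult_mono[OF mult_mono[OF S C] D] E]) (use h0 l in auto)
  also have "\<dots> = sinh h powr b1 * cosh h powr b2 * Xi_density TYPE('k) (h, g0, G)"
    using h0 by (simp add: Xi_density_def m_def mult_ac)
  finally show ?thesis .
qed

lemma Xi_integrand_test_fun_ge:
  fixes G :: "real^'n^'k" and b1 b2 s :: real
  assumes r: "0 < r"
    and good: "g0 \<noteq> 0" "1/2 \<le> det (xi_gram g0 G)" "norm g0 \<le> B" "norm G \<le> B" "1 \<le> B"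
    and j: "j < N" and h: "4 * test_scale j \<le> h" "h \<le> 5 * test_scale j"
    and scaling: "r * (real CARD('k) - s) + b1 + real (CARD('n) - CARD('k) - 1) = -1"
  defines "c0 \<equiv> (2 / (real CARD('k) * B)) ^ CARD('k) / 2"
    and "c1 \<equiv> min (4 powr b1) (10 powr b1) * min 1 (2 powr b2) * 4^(CARD('n) - CARD('k) - 1) * exp (- B\<^sup>2)"
  shows "ennreal (c0 powr r * c1 / test_scale j)
    \<le> epow (Radon_k (test_fun s N) h g0 G) r
        * ennreal (sinh h powr b1 * cosh h powr b2 * Xi_density TYPE('k) (h, g0, G))"
proof -
  define l where "l = test_scale j"
  have l: "0 < l" "l \<le> 1/8" using test_scale_pos test_scale_le by (simp_all add: l_def)
  have c0: "0 < c0" using good by (simp add: c0_def)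
  have R: "ennreal ((c0 * l powr (real CARD('k) - s)) powr r) \<le> epow (Radon_k (test_fun s N) h g0 G) r"
    using Radon_k_test_fun_ge[OF good(1,2,4,5) j h] c0 l r
    by (intro epow_ge) (simp_all add: c0_def l_def)
  have W: "c1 * l powr (b1 + real (CARD('n) - CARD('k) - 1))
      \<le> sinh h powr b1 * cosh h powr b2 * Xi_density TYPE('k) (h, g0, G)"
    unfolding c1_def using h good(3,4) by (intro Xi_weight_ge l) (simp_all add: l_def)
  have "ennreal ((c0 * l powr (real CARD('k) - s)) powr r)
        * ennreal (c1 * l powr (b1 + real (CARD('n) - CARD('k) - 1)))
      \<le> epow (Radon_k (test_fun s N) h g0 G) r
        * ennreal (sinh h powr b1 * cosh h powr b2 * Xi_density TYPE('k) (h, g0, G))"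
    by (rule mult_mono[OF R ennreal_leI[OF W]]) auto
  moreover have "c0 powr r * c1 / l
      = (c0 * l powr (real CARD('k) - s)) powr r * (c1 * l powr (b1 + real (CARD('n) - CARD('k) - 1)))"
  proof -
    have "c0 powr r * c1 / l
        = c0 powr r * c1 * l powr (r * (real CARD('k) - s) + b1 + real (CARD('n) - CARD('k) - 1))"
      unfolding scaling using l by (simp add: powr_minus_divide)
    also have "\<dots> = (c0 * l powr (real CARD('k) - s)) powr r * (c1 * l powr (b1 + real (CARD('n) - CARD('k) - 1)))"
      using c0 l by (simp add: powr_mult powr_powr powr_add mult_ac)
    finally show ?thesis .
  qed
  moreover have "0 \<le> c1" by (simp add: c1_def)
  ultimately show ?thesis by (simp add: ennreal_mult l_def)
qed

lemma nn_integral_ge_sum_disjoint: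
  fixes c :: "'i \<Rightarrow> ennreal" and F :: "'a \<Rightarrow> ennreal"
  assumes "finite I" and sets: "\<And>j. j \<in> I \<Longrightarrow> S j \<in> sets M"
    and disjoint: "\<And>i j x. i \<in> I \<Longrightarrow> j \<in> I \<Longrightarrow> x \<in> S i \<Longrightarrow> x \<in> S j \<Longrightarrow> i = j"
    and le: "\<And>j x. j \<in> I \<Longrightarrow> x \<in> S j \<Longrightarrow> c j \<le> F x"
  shows "(\<Sum>j\<in>I. c j * emeasure M (S j)) \<le> (\<integral>\<^sup>+ x. F x \<partial>M)"
proof -
  have pointwise: "(\<Sum>j\<in>I. c j * indicator (S j) x) \<le> F x" for x
  proof (cases "\<exists>j\<in>I. x \<in> S j")
    case True
    then obtain j where j: "j \<in> I" "x \<in> S j" by blast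
    have "(\<Sum>i\<in>I. c i * indicator (S i) x) = (\<Sum>i\<in>I. if i = j then c j else 0)"
      using disjoint j by (intro sum.cong) (auto simp: indicator_def)
    then show ?thesis using assms(1) j le by simp
  qed auto
  have "(\<Sum>j\<in>I. c j * emeasure M (S j)) = (\<Sum>j\<in>I. \<integral>\<^sup>+ x. c j * indicator (S j) x \<partial>M)"
    using sets by (intro sum.cong refl nn_integral_cmult_indicator[symmetric])
  also have "\<dots> = (\<integral>\<^sup>+ x. (\<Sum>j\<in>I. c j * indicator (S j) x) \<partial>M)"
    using sets by (intro nn_integral_sum[symmetric]) auto
  also have "\<dots> \<le> (\<integral>\<^sup>+ x. F x \<partial>M)" by (intro nn_integral_mono pointwise)
  finally show ?thesis .
qed

lemma emeasure_lborel_interval_Times: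
  fixes Q :: "'a::euclidean_space set"
  assumes "a \<le> b" "Q \<in> sets lborel"
  shows "emeasure (lborel :: (real \<times> 'a) measure) ({a..b} \<times> Q) = ennreal (b - a) * emeasure lborel Q"
proof -
  have "emeasure (lborel :: (real \<times> 'a) measure) ({a..b} \<times> Q) = emeasure (lborel \<Otimes>\<^sub>M lborel) ({a..b} \<times> Q)"
    by (simp add: lborel_prod)
  also have "\<dots> = emeasure lborel {a..b} * emeasure lborel Q"
    using assms by (intro lborel.emeasure_pair_measure_Times) auto
  finally show ?thesis using assms by simp
qed

lemma Xi_weighted_pow_Radon_test_fun_ge_on_box:
  fixes Q :: "((real^'n) \<times> (real^'n^'k)) set" and b1 b2 :: real
  assumes r: "0 < r" and Q: "Q \<in> sets lborel" and B: "1 \<le> B"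
    and good: "\<And>g0 G. (g0, G) \<in> Q \<Longrightarrow>
       g0 \<noteq> 0 \<and> 1/2 \<le> det (xi_gram g0 G) \<and> norm g0 \<le> B \<and> norm G \<le> B"
    and scaling: "r * (real CARD('k) - s) + b1 + real (CARD('n) - CARD('k) - 1) = -1"
  defines "E \<equiv> ((2 / (real CARD('k) * B)) ^ CARD('k) / 2) powr r
    * (min (4 powr b1) (10 powr b1) * min 1 (2 powr b2) * 4^(CARD('n) - CARD('k) - 1) * exp (- B\<^sup>2))"
  shows "of_nat N * ennreal E * emeasure lborel Q
    \<le> Xi_weighted_pow r b1 b2 (\<lambda>h g0 (G :: real^'n^'k). Radon_k (test_fun s N) h g0 G)"
proof -
  define S :: "nat \<Rightarrow> (real \<times> (real^'n) \<times> (real^'n^'k)) set" where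
    "S j = {4 * test_scale j .. 5 * test_scale j} \<times> Q" for j
  have "of_nat N * ennreal E * emeasure lborel Q = (\<Sum>j<N. ennreal E * emeasure lborel Q)"
    by (simp add: mult.assoc)
  also have "\<dots> = (\<Sum>j<N. ennreal (E / test_scale j) * emeasure lborel (S j))"
  proof (intro sum.cong refl)
    fix j
    have "ennreal (E / test_scale j) * emeasure lborel (S j)
        = ennreal (E / test_scale j) * ennreal (test_scale j) * emeasure lborel Q"
      using Q test_scale_pos[of j] unfolding S_def by (simp add: emeasure_lborel_interval_Times mult.assoc)
    also have "\<dots> = ennreal E * emeasure lborel Q"
      using test_scale_pos[of j] by (simp add: E_def ennreal_mult[symmetric])
    finally show "ennreal E * emeasure lborel Q = ennreal (E / test_scale j) * emeasure lborel (S j)" ..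
  qed
  also have "\<dots> \<le> Xi_weighted_pow r b1 b2 (\<lambda>h g0 (G :: real^'n^'k). Radon_k (test_fun s N) h g0 G)"
    unfolding Xi_weighted_pow_def
  proof (rule nn_integral_ge_sum_disjoint)
    show "S j \<in> sets lborel" for j
      using Q unfolding S_def by (simp add: lborel_prod[symmetric])
    show "i = j" if "\<xi> \<in> S i" "\<xi> \<in> S j" for \<xi> i j
      using that test_scale_ranges_disjoint[of 4 5 i "fst \<xi>" j] by (auto simp: S_def)
  next
    fix \<xi> :: "real \<times> (real^'n) \<times> (real^'n^'k)" and j
    assume j: "j \<in> {..<N}" and "\<xi> \<in> S j"
    then obtain h g0 G where \<xi>: "\<xi> = (h, g0, G)" and q: "(g0, G) \<in> Q"
      and h: "4 * test_scale j \<le> h" "h \<le> 5 * test_scale j"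
      by (cases \<xi>) (auto simp: S_def)
    have "ennreal (E / test_scale j) \<le> epow (Radon_k (test_fun s N) h g0 G) r
        * ennreal (sinh h powr b1 * cosh h powr b2 * Xi_density TYPE('k) (h, g0, G))"
      unfolding E_def using good[OF q] B j
      by (intro Xi_integrand_test_fun_ge[OF r _ _ _ _ _ _ h scaling]) auto
    then show "ennreal (E / test_scale j) \<le> (case \<xi> of (h, g0, G) \<Rightarrow>
        epow (Radon_k (test_fun s N) h g0 G) r
          * ennreal (sinh h powr b1 * cosh h powr b2 * Xi_density TYPE('k) (h, g0, G)))"
      by (simp add: \<xi>)
  qed simp
  finally show ?thesis .
qed

lemma Xi_weighted_pow_Radon_test_fun_ge:
  assumes r: "0 < r" and kn: "CARD('k) < CARD('n)"
    and scaling: "r * (real CARD('k) - s) + b1 + real (CARD('n) - CARD('k) - 1) = -1"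
  obtains c where "0 < c" "\<And>N. ennreal (real N * c)
      \<le> Xi_weighted_pow r b1 b2 (\<lambda>h g0 (G :: real^'n^'k). Radon_k (test_fun s N) h g0 G)"
proof -
  obtain qa qb :: "(real^'n) \<times> (real^'n^'k)" and B where
    Q: "box qa qb \<noteq> {}" "1 \<le> B" and good: "\<And>g0 G. (g0, G) \<in> box qa qb \<Longrightarrow>
       g0 \<noteq> 0 \<and> 1/2 \<le> det (xi_gram g0 G) \<and> norm g0 \<le> B \<and> norm G \<le> B"
    using good_xi_param_box[OF kn] by blast
  define E where "E = ((2 / (real CARD('k) * B)) ^ CARD('k) / 2) powr r
    * (min (4 powr b1) (10 powr b1) * min 1 (2 powr b2) * 4^(CARD('n) - CARD('k) - 1) * exp (- B\<^sup>2))"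
  have "0 < measure lborel (box qa qb)"
    using Q(1) by (auto simp: box_ne_empty measure_lborel_box_eq inner_diff_left intro!: prod_pos)
  moreover have "0 < E" using Q by (simp add: E_def)
  moreover have "ennreal (real N * (E * measure lborel (box qa qb))) = of_nat N * ennreal E * emeasure lborel (box qa qb)" for N
    using \<open>0 < E\<close> by (simp add: emeasure_eq_measure2 ennreal_mult ennreal_of_nat_eq_real_of_nat mult_ac)
  ultimately show ?thesis
    using that[of "E * measure lborel (box qa qb)"]
      Xi_weighted_pow_Radon_test_fun_ge_on_box[OF r _ Q(2) good scaling]
    by (simp add: E_def)
qed

theorem corollary8p3:
  fixes p r a1 a2 b1 b2 :: real
  assumes n2: "CARD('n::finite) \<ge> 2"
    and kn: "CARD('k::finite) \<le> CARD('n) - 1"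
    and a: "a1 + a2 > real CARD('k) - real CARD('n)"
    and p1: "1 \<le> p"
    and p2: "CARD('k) = 1 \<or> p < (a1 + a2 + real CARD('n) - 1) / (real CARD('k) - 1)"
    and r1: "1 \<le> r"
    and b_le: "(b2 + real CARD('k) - 1) / r - (a2 - 1) / p
                 \<le> (a1 + real CARD('n)) / p - (b1 + real CARD('n) - real CARD('k)) / r"
    and b_eq: "(a1 + real CARD('n)) / p - (b1 + real CARD('n) - real CARD('k)) / r = real CARD('k)"
    and bdd: "Radon_bounded TYPE('k) TYPE('n) p a1 a2 r b1 b2"
  shows "r \<ge> p"
proof -
  have r: "0 < r" and p: "0 < p" using r1 p1 by auto
  have kn': "CARD('k) < CARD('n)" using n2 kn by linarith
  define s where "s = (a1 + real CARD('n)) / p"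
  have s: "s * p = a1 + real CARD('n)" using p by (simp add: s_def)
  have scaling: "r * (real CARD('k) - s) + b1 + real (CARD('n) - CARD('k) - 1) = -1"
    using b_eq r kn' by (simp add: s_def of_nat_diff field_simps)
  obtain K where K: "0 < K"
    "\<And>N. Lp_weighted_pow p a1 a2 (test_fun s N :: real^'n \<Rightarrow> real) \<le> ennreal (real N * K)"
    using Lp_weighted_pow_test_fun_le[OF p s] by blast
  obtain c where c: "0 < c" "\<And>N. ennreal (real N * c)
      \<le> Xi_weighted_pow r b1 b2 (\<lambda>h g0 (G :: real^'n^'k). Radon_k (test_fun s N) h g0 G)"
    using Xi_weighted_pow_Radon_test_fun_ge[OF r kn' scaling] by blast
  obtain C where C: "0 < C" and bound: "\<And>f :: real^'n \<Rightarrow> real.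
      f \<in> borel_measurable borel \<Longrightarrow> (\<forall>x. 0 \<le> f x) \<Longrightarrow>
      epow (Xi_weighted_pow r b1 b2 (\<lambda>h g0 (G :: real^'n^'k). Radon_k f h g0 G)) (1 / r)
        \<le> ennreal C * epow (Lp_weighted_pow p a1 a2 f) (1 / p)"
    using bdd unfolding Radon_bounded_def by auto
  have "(real N * c) powr (1/r) \<le> C * (real N * K) powr (1/p)" for N
    using bound[OF test_fun_measurable allI[OF test_fun_nonneg]] c K C r p
    by (intro powr_le_of_epow_le[OF c(2) K(2)]) auto
  then show "r \<ge> p" using le_of_powr_growth_bound[OF r p c(1) K(1)] by blast
qed

end
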